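(* Let $q$ be a prime power, $M\geq 2$ an integer, and let $f=gg^*\in\mathbb{F}_q[x]$ be a type $2$ polynomial of degree $2n$, where $g$ is monic irreducible of degree $n$ with $g(0)\neq 0$ and $g\neq g^*$. Let $C_f\in\mathrm{Sp}(2n,q)$ be an element with characteristic polynomial $f$. Then the equation $\alpha^M=C_f$ has a solution $\alpha\in\mathrm{Sp}(2n,q)$ if and only if $g$ is an $M$-power polynomial.
   Context: For a monic polynomial $f$ of degree $r$ with $f(0)\neq0$, $f^*(x)=f(0)^{-1}x^rf(x^{-1})$. $\mathrm{Sp}(2n,q)$ is the group of $2n\times 2n$ matrices over $\mathbb{F}_q$ preserving a non-degenerate alternating bilinear form. A monic irreducible polynomial $g\in\mathbb{F}_q[x]$, $g\neq x$, of degree $k\geq1$ is an $M$-power polynomial if $g(x^M)$ has a monic irreducible factor of degree $k$. *)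

theory Defs
  imports "Jordan_Normal_Form.Char_Poly" "HOL-Computational_Algebra.Polynomial"
begin

definition recip_poly :: "'a::field poly \<Rightarrow> 'a poly" where
  "recip_poly f = Polynomial.smult (inverse (coeff f 0)) (reflect_poly f)"

(* Omega is the Gram matrix of a non-degenerate alternating bilinear form
   B(u,v) = u^T Omega v on F^d *)
definition nondeg_alternating :: "nat \<Rightarrow> 'a::field mat \<Rightarrow> bool" where
  "nondeg_alternating d Omega \<longleftrightarrow> Omega \<in> carrier_mat d d
     \<and> (\<forall>v \<in> carrier_vec d. v \<bullet> (Omega *\<^sub>v v) = 0)
     \<and> det Omega \<noteq> 0"

definition sp_group :: "nat \<Rightarrow> 'a::field mat \<Rightarrow> 'a mat set" where
  "sp_group d Omega = {A \<in> carrier_mat d d. transpose_mat A * Omega * A = Omega}"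

definition M_power_poly :: "nat \<Rightarrow> 'a::field poly \<Rightarrow> bool" where
  "M_power_poly M g \<longleftrightarrow> monic g \<and> irreducible g \<and> g \<noteq> [:0, 1:] \<and> degree g \<ge> 1
     \<and> (\<exists>h. monic h \<and> irreducible h \<and> degree h = degree g
            \<and> h dvd pcompose g (monom 1 M))"

end

theory Submission
  imports Defs "HOL-Number_Theory.Cong"
begin

text \<open>
  Let \<open>g\<^sup>*\<close> be the reciprocal of \<open>g\<close>. Both are irreducible factors of the characteristic
  polynomial \<open>g g\<^sup>*\<close> of \<open>C\<close> and they are coprime, so there are nonzero vectors \<open>v\<^sub>1\<close>, \<open>v\<^sub>2\<close>
  with \<open>g(C) v\<^sub>1 = 0\<close> and \<open>g\<^sup>*(C) v\<^sub>2 = 0\<close>, and counting shows that the vectors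
  \<open>s(C) v\<^sub>1 + t(C) v\<^sub>2\<close> with \<open>deg s, deg t < n\<close> exhaust \<open>F\<^sub>q\<^sup>2\<^sup>n\<close>. If \<open>\<alpha>\<^sup>M = C\<close>, then \<open>\<alpha>\<close>
  commutes with \<open>C\<close>, hence acts on \<open>v\<^sub>1\<close> as some \<open>s(C)\<close>, and \<open>C v\<^sub>1 = s(C)\<^sup>M v\<^sub>1\<close> gives
  \<open>s\<^sup>M \<equiv> x (mod g)\<close>. In the field \<open>F\<^sub>q[x]/(g)\<close> the existence of such an \<open>M\<close>-th root of \<open>x\<close> is
  equivalent to \<open>g\<close> being an \<open>M\<close>-power polynomial, again by counting.

  Conversely, let \<open>p\<^sup>M \<equiv> x (mod g)\<close> and let \<open>\<iota>\<close> be an inverse of \<open>x\<close> modulo \<open>g g\<^sup>*\<close>.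
  Substituting \<open>\<iota>\<close> for \<open>x\<close> exchanges the ideals \<open>(g)\<close> and \<open>(g\<^sup>*)\<close>, so by the Chinese
  remainder theorem there is \<open>P\<close> with \<open>P\<^sup>M \<equiv> x\<close> and \<open>P(\<iota>) P \<equiv> 1\<close> modulo \<open>g g\<^sup>*\<close>.
  By Cayley--Hamilton \<open>\<alpha> = P(C)\<close> satisfies \<open>\<alpha>\<^sup>M = C\<close>, and since \<open>C\<^sup>T \<Omega> = \<Omega> C\<^sup>-\<^sup>1\<close>
  we get \<open>\<alpha>\<^sup>T \<Omega> \<alpha> = \<Omega> P(C\<^sup>-\<^sup>1) P(C) = \<Omega>\<close>.
\<close>

section \<open>Polynomials over a field\<close>

lemma poly_gcd_combination:
  fixes a b :: "'a::field poly"
  shows "\<exists>u v d. d = u * a + v * b \<and> d dvd a \<and> d dvd b"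
proof (induction "euclidean_size b" arbitrary: a b rule: less_induct)
  case less
  show ?case
  proof (cases "b = 0")
    case True
    then show ?thesis by (intro exI[of _ 1] exI[of _ 0] exI[of _ a]) auto
  next
    case False
    from less[OF mod_size_less[OF False]]
    obtain u v d where d: "d = u * b + v * (a mod b)" "d dvd b" "d dvd a mod b" by blast
    have "a mod b = a - a div b * b" by (simp add: minus_div_mult_eq_mod)
    with d(1) have "d = v * a + (u - v * (a div b)) * b" by (simp add: algebra_simps)
    moreover have "d dvd a" using d(3) by (simp add: dvd_mod_iff[OF d(2)])
    ultimately show ?thesis using d(2) by blast
  qed
qed

lemma poly_bezout:
  fixes a b :: "'a::field poly"
  assumes "coprime a b"
  obtains u v where "u * a + v * b = 1"
proof -
  obtain u v d where d: "d = u * a + v * b" "d dvd a" "d dvd b"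
    using poly_gcd_combination by blast
  have "is_unit d" using assms d(2,3) by (rule coprime_common_divisor)
  then obtain e where "1 = d * e" by (rule dvdE)
  then have "(e * u) * a + (e * v) * b = 1" using d(1) by (simp add: algebra_simps)
  then show thesis by (rule that)
qed

lemma irreducible_imp_coprime_poly:
  fixes g r :: "'a::field poly"
  assumes "irreducible g" and "\<not> g dvd r"
  shows "coprime g r"
proof (rule coprimeI)
  fix d assume "d dvd g" "d dvd r"
  have "prime_elem g" using assms(1) by (rule field_poly_irreducible_imp_prime)
  show "is_unit d"
  proof (rule ccontr)
    assume "\<not> is_unit d"
    with \<open>prime_elem g\<close> \<open>d dvd g\<close> have "g dvd d" by (rule prime_elemD2)
    with \<open>d dvd r\<close> assms(2) show False using dvd_trans by blast
  qed
qed

lemma cong_mult_modulus_poly: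
  fixes a b x y :: "'a::field poly"
  assumes "coprime a b" and "[x = y] (mod a)" and "[x = y] (mod b)"
  shows "[x = y] (mod a * b)"
proof -
  obtain u v where uv: "u * a + v * b = 1" using poly_bezout[OF assms(1)] .
  from assms(2) have "a dvd x - y" by (simp add: cong_iff_dvd_diff)
  then obtain k where k: "x - y = a * k" by (rule dvdE)
  from assms(3) have "b dvd x - y" by (simp add: cong_iff_dvd_diff)
  then obtain l where l: "x - y = b * l" by (rule dvdE)
  have "x - y = (u * a + v * b) * (x - y)" using uv by simp
  also have "\<dots> = u * a * (x - y) + v * b * (x - y)" by (simp add: algebra_simps)
  also have "\<dots> = u * a * (b * l) + v * b * (a * k)" by (simp only: k[symmetric] l[symmetric])
  also have "\<dots> = a * b * (u * l + v * k)" by (simp add: algebra_simps)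
  finally show ?thesis by (simp add: cong_iff_dvd_diff)
qed

lemma cong_pcompose:
  fixes a b m :: "'a::field poly"
  assumes "[a = b] (mod m)"
  shows "[r \<circ>\<^sub>p a = r \<circ>\<^sub>p b] (mod m)"
proof (induction r rule: pCons_induct)
  case (pCons c r)
  have "[[:c:] + a * (r \<circ>\<^sub>p a) = [:c:] + b * (r \<circ>\<^sub>p b)] (mod m)"
    by (intro cong_add cong_mult assms pCons.IH cong_refl)
  then show ?case by (simp add: pcompose_pCons)
qed simp

lemma pcompose_x_power: "([:0, 1:] ^ k) \<circ>\<^sub>p p = (p :: 'a::comm_ring_1 poly) ^ k"
  by (induction k) (simp_all add: pcompose_mult)

lemma cong_inverse_poly:
  fixes a m :: "'a::field poly"
  assumes "coprime a m"
  obtains b where "[a * b = 1] (mod m)"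
proof -
  obtain u v where "u * a + v * m = 1" using assms by (rule poly_bezout)
  then have "a * u - 1 = m * (- v)" by (simp add: algebra_simps)
  then have "[a * u = 1] (mod m)" by (simp add: cong_iff_dvd_diff)
  then show thesis by (rule that)
qed

lemma poly_chinese_remainder:
  fixes a b x y :: "'a::field poly"
  assumes "coprime a b"
  obtains P where "[P = x] (mod a)" and "[P = y] (mod b)"
proof -
  obtain u v where uv: "u * a + v * b = 1" using assms by (rule poly_bezout)
  define P where "P = x * (v * b) + y * (u * a)"
  have "P - x = P - x * (u * a + v * b)" using uv by simp
  also have "\<dots> = a * (y * u - x * u)" by (simp add: P_def algebra_simps)
  finally have x: "P - x = a * (y * u - x * u)" .
  have "P - y = P - y * (u * a + v * b)" using uv by simp
  also have "\<dots> = b * (x * v - y * v)" by (simp add: P_def algebra_simps)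
  finally have "P - y = b * (x * v - y * v)" .
  with x show thesis by (intro that[of P]) (simp_all add: cong_iff_dvd_diff)
qed

lemma irreducible_x: "irreducible [:0, 1 :: 'a::field:]"
  by (rule irreducible_linear_field_poly) simp

lemma x_dvd_iff_coeff_0: "[:0, 1:] dvd (p :: 'a::comm_ring_1 poly) \<longleftrightarrow> coeff p 0 = 0"
  using poly_eq_0_iff_dvd[of p 0] by (simp add: poly_0_coeff_0)

lemma coprime_x_poly:
  fixes F :: "'a::field poly"
  assumes "coeff F 0 \<noteq> 0"
  shows "coprime [:0, 1:] F"
  by (rule irreducible_imp_coprime_poly[OF irreducible_x]) (simp add: x_dvd_iff_coeff_0 assms)

lemma irreducible_imp_degree_pos:
  "irreducible (g :: 'a::field poly) \<Longrightarrow> 0 < degree g"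
  by (metis irreducible_def is_unit_iff_degree neq0_conv)

lemma eq_of_prime_dvd_mult_diff:
  fixes p q a b :: "'a::field poly"
  assumes "p dvd q * (a - b)" and "prime_elem p" and "\<not> p dvd q"
    and "degree a < degree p" and "degree b < degree p"
  shows "a = b"
proof -
  have "p dvd a - b" using assms(1-3) by (simp add: prime_elem_dvd_mult_iff)
  moreover have "degree (a - b) < degree p" using assms(4,5) degree_diff_le_max[of a b] by simp
  ultimately show "a = b" using dvd_imp_degree_le by force
qed

lemma dvd_of_dvd_pcompose:
  fixes g h p r :: "'a::field poly"
  assumes "irreducible g" and "\<not> is_unit h" and "h dvd g \<circ>\<^sub>p p" and "h dvd r \<circ>\<^sub>p p"
  shows "g dvd r"
proof (rule ccontr)
  assume "\<not> g dvd r"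
  with assms(1) have "coprime g r" by (rule irreducible_imp_coprime_poly)
  then obtain u v where "u * g + v * r = 1" by (rule poly_bezout)
  then have "(u \<circ>\<^sub>p p) * (g \<circ>\<^sub>p p) + (v \<circ>\<^sub>p p) * (r \<circ>\<^sub>p p) = 1"
    by (metis pcompose_hom.hom_add pcompose_hom.hom_mult pcompose_1)
  moreover have "h dvd (u \<circ>\<^sub>p p) * (g \<circ>\<^sub>p p) + (v \<circ>\<^sub>p p) * (r \<circ>\<^sub>p p)"
    using assms(3,4) by simp
  ultimately show False using assms(2) by simp
qed

lemma irreducible_factor_dvd_pcompose:
  fixes g H p :: "'a::field poly"
  assumes "prime_elem g" and "H \<noteq> 0" and "g dvd H \<circ>\<^sub>p p"
  obtains h where "irreducible h" and "monic h" and "h dvd H" and "g dvd h \<circ>\<^sub>p p"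
proof -
  define c where "c = inverse (lead_coeff H)"
  have "monic (Polynomial.smult c H)" using assms(2) by (simp add: c_def)
  then obtain as e where fin: "finite as" and H: "Polynomial.smult c H = (\<Prod>a\<in>as. a ^ Suc (e a))"
    and as: "as \<subseteq> {q. irreducible q \<and> monic q}"
    using monic_irreducible_factorization by blast
  have "g dvd Polynomial.smult c H \<circ>\<^sub>p p" using assms(3) by (simp add: pcompose_smult dvd_smult)
  also have "Polynomial.smult c H \<circ>\<^sub>p p = (\<Prod>a\<in>as. (a \<circ>\<^sub>p p) ^ Suc (e a))"
    by (simp only: H pcompose_hom.hom_prod pcompose_hom.hom_power)
  finally have "g dvd prod_mset (image_mset (\<lambda>a. (a \<circ>\<^sub>p p) ^ Suc (e a)) (mset_set as))"
    by (simp only: prod_unfold_prod_mset)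
  then obtain x where x: "x \<in># image_mset (\<lambda>a. (a \<circ>\<^sub>p p) ^ Suc (e a)) (mset_set as)" "g dvd x"
    by (rule prime_elem_dvd_prod_msetE[OF assms(1)])
  from x(1) fin have "x \<in> (\<lambda>a. (a \<circ>\<^sub>p p) ^ Suc (e a)) ` as" by simp
  then obtain a where a: "a \<in> as" and "x = (a \<circ>\<^sub>p p) ^ Suc (e a)" by (rule imageE)
  with x(2) have "g dvd a \<circ>\<^sub>p p" using assms(1) by (blast dest: prime_elem_dvd_power)
  moreover have "a dvd H"
  proof -
    have "a dvd a ^ Suc (e a)" by simp
    also have "\<dots> dvd Polynomial.smult c H" unfolding H using fin a by (rule dvd_prodI)
    finally show ?thesis by (rule dvd_smult_cancel) (simp add: c_def assms(2))
  qed
  ultimately show thesis using a as by (intro that) auto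
qed

section \<open>$M$-th roots of $x$ modulo an irreducible polynomial over a finite field\<close>

lemma bij_betw_coeff_list:
  assumes "0 < k"
  shows "bij_betw (\<lambda>p. map (coeff p) [0..<k]) {p :: 'a::zero poly. degree p < k}
           {xs. length xs = k}"
proof (rule bij_betw_byWitness[where f' = Poly])
  show "\<forall>p \<in> {p. degree p < k}. Poly (map (coeff p) [0..<k]) = p"
    by (auto intro!: poly_eqI simp: nth_default_def coeff_eq_0)
  show "\<forall>xs \<in> {xs. length xs = k}. map (coeff (Poly xs)) [0..<k] = xs"
    by (auto intro!: nth_equalityI simp: nth_default_def)
  show "(\<lambda>p. map (coeff p) [0..<k]) ` {p. degree p < k} \<subseteq> {xs. length xs = k}"
    by auto
  have deg: "degree (Poly xs) < k" if "length xs = k" for xs :: "'a list"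
  proof -
    have "degree (Poly xs) \<le> k - 1" by (rule degree_le) (auto simp: nth_default_def that)
    with assms show ?thesis by simp
  qed
  then show "Poly ` {xs. length xs = k} \<subseteq> {p :: 'a poly. degree p < k}" by blast
qed

lemma
  fixes k :: nat
  assumes "0 < k"
  shows finite_degree_less: "finite {p :: 'a::{zero,finite} poly. degree p < k}"
    and card_degree_less: "card {p :: 'a::{zero,finite} poly. degree p < k} = card (UNIV :: 'a set) ^ k"
proof -
  have "card {p :: 'a poly. degree p < k} = card {xs :: 'a list. length xs = k}"
    using bij_betw_coeff_list[OF assms] by (rule bij_betw_same_card)
  then show card: "card {p :: 'a poly. degree p < k} = card (UNIV :: 'a set) ^ k"
    using card_lists_length_eq[of "UNIV :: 'a set" k] by simp
  show "finite {p :: 'a poly. degree p < k}"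
    by (rule card_ge_0_finite) (simp add: card finite_UNIV_card_ge_0)
qed

lemma one_less_card_field: "1 < card (UNIV :: 'a::{field,finite} set)"
  using card_mono[of UNIV "{0, 1 :: 'a}"] by simp

lemma exists_pcompose_dvd:
  fixes h p :: "'a::{field,finite} poly"
  assumes "0 < degree h"
  obtains s where "s \<noteq> 0" and "degree s \<le> degree h" and "h dvd s \<circ>\<^sub>p p"
proof -
  let ?n = "degree h"
  define \<phi> where "\<phi> s = (s \<circ>\<^sub>p p) mod h" for s
  have "h \<noteq> 0" using assms by auto
  then have "\<phi> s \<in> {r. degree r < ?n}" for s
    using assms degree_mod_less[of h "s \<circ>\<^sub>p p"] by (cases "\<phi> s = 0") (auto simp: \<phi>_def)
  then have "card (\<phi> ` {s. degree s < ?n + 1}) \<le> card {r :: 'a poly. degree r < ?n}"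
    using assms by (intro card_mono finite_degree_less) auto
  also have "\<dots> < card {s :: 'a poly. degree s < ?n + 1}"
    using assms one_less_card_field[where 'a='a] by (simp add: card_degree_less)
  finally obtain s1 s2 where s12: "degree s1 < ?n + 1" "degree s2 < ?n + 1" "s1 \<noteq> s2" "\<phi> s1 = \<phi> s2"
    by (auto dest!: pigeonhole simp: inj_on_def)
  show thesis
  proof (rule that[of "s1 - s2"])
    show "s1 - s2 \<noteq> 0" "degree (s1 - s2) \<le> ?n"
      using s12 degree_diff_le_max[of s1 s2] by auto
    show "h dvd (s1 - s2) \<circ>\<^sub>p p"
      using s12(4) by (simp add: \<phi>_def pcompose_diff mod_eq_dvd_iff)
  qed
qed

lemma degree_le_of_dvd_pcompose:
  fixes g h p :: "'a::{field,finite} poly"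
  assumes "irreducible g" and "irreducible h" and "h dvd g \<circ>\<^sub>p p"
  shows "degree g \<le> degree h"
proof -
  obtain s where s: "s \<noteq> 0" "degree s \<le> degree h" "h dvd s \<circ>\<^sub>p p"
    using exists_pcompose_dvd[OF irreducible_imp_degree_pos[OF assms(2)]] .
  have "g dvd s"
    using assms(1) irreducible_not_unit[OF assms(2)] assms(3) s(3) by (rule dvd_of_dvd_pcompose)
  then have "degree g \<le> degree s" using s(1) by (rule dvd_imp_degree_le)
  with s(2) show ?thesis by simp
qed

lemma M_power_poly_of_root:
  fixes g p :: "'a::{field,finite} poly"
  assumes g: "monic g" "irreducible g" "coeff g 0 \<noteq> 0"
    and "0 < M" and root: "[p ^ M = [:0, 1:]] (mod g)"
  shows "M_power_poly M g"
proof -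
  define X :: "'a poly" where "X = monom 1 M"
  have X_p: "X \<circ>\<^sub>p p = p ^ M" by (simp add: X_def monom_altdef pcompose_x_power)
  have "[(g \<circ>\<^sub>p X) \<circ>\<^sub>p p = g \<circ>\<^sub>p [:0, 1:]] (mod g)"
    unfolding pcompose_assoc[symmetric] X_p using root by (rule cong_pcompose)
  then have "g dvd (g \<circ>\<^sub>p X) \<circ>\<^sub>p p" by (simp add: cong_dvd_iff)
  moreover have "degree (g \<circ>\<^sub>p X) = degree g * M" by (simp add: X_def degree_pcompose degree_monom_eq)
  then have "g \<circ>\<^sub>p X \<noteq> 0"
    using irreducible_imp_degree_pos[OF g(2)] \<open>0 < M\<close> by (metis degree_0 nat_0_less_mult_iff less_irrefl)
  ultimately obtain h where h: "irreducible h" "monic h" "h dvd g \<circ>\<^sub>p X" "g dvd h \<circ>\<^sub>p p"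
    using field_poly_irreducible_imp_prime[OF g(2)] by (auto elim: irreducible_factor_dvd_pcompose)
  have "degree h \<le> degree g" using h(1) g(2) h(4) by (rule degree_le_of_dvd_pcompose)
  moreover have "degree g \<le> degree h" using g(2) h(1) h(3) by (rule degree_le_of_dvd_pcompose)
  moreover have "g \<noteq> [:0, 1:]" using g(3) by auto
  ultimately show ?thesis
    using g h irreducible_imp_degree_pos[OF g(2)] unfolding M_power_poly_def X_def
    by (intro conjI exI[of _ h]) auto
qed

lemma root_of_M_power_poly:
  fixes g :: "'a::{field,finite} poly"
  assumes "M_power_poly M g"
  obtains p where "[p ^ M = [:0, 1:]] (mod g)"
proof -
  define X :: "'a poly" where "X = [:0, 1:] ^ M"
  from assms obtain h where g: "irreducible g" and n: "0 < degree g"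
    and h: "irreducible h" "degree h = degree g" "h dvd g \<circ>\<^sub>p X"
    unfolding M_power_poly_def X_def by (auto simp: monom_altdef)
  let ?P = "{s :: 'a poly. degree s < degree g}"
  \<comment> \<open>\<open>s \<mapsto> s(x\<^sup>M) mod h\<close> is injective on residues modulo \<open>g\<close>, hence onto; a preimage of \<open>x\<close> is the root.\<close>
  define \<phi> where "\<phi> s = (s \<circ>\<^sub>p X) mod h" for s
  have dvd: "g dvd r" if "h dvd r \<circ>\<^sub>p X" for r
    using g irreducible_not_unit[OF h(1)] h(3) that by (rule dvd_of_dvd_pcompose)
  have "h \<noteq> 0" using h(2) n by auto
  then have into: "r mod h \<in> ?P" for r
    using h(2) n degree_mod_less[of h r] by (cases "r mod h = 0") auto
  have "inj_on \<phi> ?P"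
  proof (rule inj_onI)
    fix s1 s2 assume s: "s1 \<in> ?P" "s2 \<in> ?P" "\<phi> s1 = \<phi> s2"
    then have "g dvd s1 - s2"
      by (intro dvd) (simp add: \<phi>_def mod_eq_dvd_iff pcompose_diff)
    moreover have "degree (s1 - s2) < degree g" using s(1,2) degree_diff_le_max[of s1 s2] by auto
    ultimately show "s1 = s2" using dvd_imp_degree_le by force
  qed
  then have "\<phi> ` ?P = ?P"
    using into finite_degree_less[OF n] by (intro endo_inj_surj) (auto simp: \<phi>_def)
  then obtain s where "\<phi> s = [:0, 1:] mod h" using into[of "[:0, 1:]"] by (metis imageE)
  then have "[s \<circ>\<^sub>p X = [:0, 1:]] (mod h)" by (simp add: \<phi>_def cong_def)
  then have "[(s \<circ>\<^sub>p X) ^ M = X] (mod h)" unfolding X_def by (rule cong_pow)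
  then have "g dvd s ^ M - [:0, 1:]"
    by (intro dvd) (simp add: cong_iff_dvd_diff pcompose_diff pcompose_hom.hom_power X_def)
  then show thesis by (intro that) (simp add: cong_iff_dvd_diff)
qed

lemma M_power_poly_iff_root:
  fixes g :: "'a::{field,finite} poly"
  assumes "monic g" and "irreducible g" and "coeff g 0 \<noteq> 0" and "0 < M"
  shows "M_power_poly M g \<longleftrightarrow> (\<exists>p. [p ^ M = [:0, 1:]] (mod g))"
  using M_power_poly_of_root[OF assms] root_of_M_power_poly by metis

section \<open>Reciprocal polynomials and substitution of $x^{-1}$\<close>

lemma reflect_poly_eq_smult_recip_poly:
  "coeff g 0 \<noteq> 0 \<Longrightarrow> reflect_poly g = Polynomial.smult (coeff g 0) (recip_poly g)"
  by (simp add: recip_poly_def)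

lemma degree_recip_poly: "coeff g 0 \<noteq> 0 \<Longrightarrow> degree (recip_poly g) = degree g"
  by (simp add: recip_poly_def degree_reflect_poly_eq)

lemma monic_recip_poly: "coeff g 0 \<noteq> 0 \<Longrightarrow> monic (recip_poly g)"
  by (simp add: recip_poly_def degree_reflect_poly_eq coeff_reflect_poly)

lemma coeff_0_recip_poly: "g \<noteq> 0 \<Longrightarrow> coeff g 0 \<noteq> 0 \<Longrightarrow> coeff (recip_poly g) 0 \<noteq> 0"
  by (simp add: recip_poly_def)

lemma dvd_reflect_poly_recip_poly: "coeff g 0 \<noteq> 0 \<Longrightarrow> g dvd reflect_poly (recip_poly g)"
  by (simp add: recip_poly_def reflect_poly_smult reflect_poly_reflect_poly dvd_smult)

lemma irreducible_recip_poly: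
  fixes g :: "'a::field poly"
  assumes irr: "irreducible g" and c0: "coeff g 0 \<noteq> 0"
  shows "irreducible (recip_poly g)"
proof (rule irreducibleI)
  let ?r = "recip_poly g"
  have "g \<noteq> 0" using irr by auto
  have deg: "0 < degree ?r" using irreducible_imp_degree_pos[OF irr] by (simp add: degree_recip_poly c0)
  then show "?r \<noteq> 0" "\<not> is_unit ?r" by (auto simp: is_unit_iff_degree)
  fix a b assume ab: "?r = a * b"
  have "coeff a 0 * coeff b 0 \<noteq> 0"
    using coeff_0_recip_poly[OF \<open>g \<noteq> 0\<close> c0] by (simp add: ab coeff_mult_0)
  then have a0: "coeff a 0 \<noteq> 0" and b0: "coeff b 0 \<noteq> 0" by auto
  have "g = Polynomial.smult (coeff g 0) (reflect_poly ?r)"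
    using c0 by (simp add: recip_poly_def reflect_poly_smult reflect_poly_reflect_poly)
  also have "\<dots> = Polynomial.smult (coeff g 0) (reflect_poly a) * reflect_poly b"
    by (simp add: ab reflect_poly_mult)
  finally have "is_unit (Polynomial.smult (coeff g 0) (reflect_poly a)) \<or> is_unit (reflect_poly b)"
    using irr by (rule irreducibleD[rotated])
  then have "degree a = 0 \<or> degree b = 0"
    using c0 a0 b0 by (auto simp: is_unit_field_poly degree_reflect_poly_eq)
  then show "is_unit a \<or> is_unit b" using a0 b0 by (auto simp: is_unit_iff_degree)
qed

lemma recip_poly_not_dvd:
  fixes g :: "'a::field poly"
  assumes "monic g" and "irreducible g" and "coeff g 0 \<noteq> 0" and "g \<noteq> recip_poly g"
  shows "\<not> g dvd recip_poly g" and "\<not> recip_poly g dvd g"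
proof -
  have irr: "irreducible (recip_poly g)" using assms(2,3) by (rule irreducible_recip_poly)
  have mon: "monic (recip_poly g)" using assms(3) by (rule monic_recip_poly)
  show "\<not> recip_poly g dvd g"
  proof
    assume dvd: "recip_poly g dvd g"
    have "g dvd recip_poly g"
      using irreducibleD'[OF assms(2) dvd] irreducible_not_unit[OF irr] by blast
    then have "g = recip_poly g" using dvd assms(1) mon by (intro poly_dvd_antisym) auto
    with assms(4) show False by simp
  qed
  then show "\<not> g dvd recip_poly g"
    using irreducibleD'[OF irr] irreducible_not_unit[OF assms(2)] by blast
qed

lemma coprime_recip_poly:
  fixes g :: "'a::field poly"
  assumes "monic g" and "irreducible g" and "coeff g 0 \<noteq> 0" and "g \<noteq> recip_poly g"
  shows "coprime g (recip_poly g)"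
  using assms(2) recip_poly_not_dvd(1)[OF assms] by (rule irreducible_imp_coprime_poly)

lemma cong_reflect_poly_pcompose:
  fixes G F \<iota> :: "'a::field poly"
  assumes \<iota>: "[[:0, 1:] * \<iota> = 1] (mod F)"
  shows "[[:0, 1:] ^ degree G * G \<circ>\<^sub>p \<iota> = reflect_poly G] (mod F)"
proof (induction G rule: pCons_induct)
  case (pCons a G)
  show ?case
  proof (cases "G = 0")
    case False
    have "[:0, 1:] ^ degree (pCons a G) * pCons a G \<circ>\<^sub>p \<iota>
        = Polynomial.smult a ([:0, 1:] ^ Suc (degree G)) + [:0, 1:] ^ degree G * G \<circ>\<^sub>p \<iota> * ([:0, 1:] * \<iota>)"
      using False by (simp add: pcompose_pCons algebra_simps)
    also have "[\<dots> = Polynomial.smult a ([:0, 1:] ^ Suc (degree G)) + reflect_poly G * 1] (mod F)"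
      by (intro cong_add cong_mult cong_refl pCons.IH \<iota>)
    also have "Polynomial.smult a ([:0, 1:] ^ Suc (degree G)) + reflect_poly G * 1 = reflect_poly (pCons a G)"
      using False by (simp add: reflect_poly_pCons' monom_altdef)
    finally show ?thesis .
  qed simp
qed simp

lemma cong_pcompose_inverse_x:
  fixes G R \<iota> a b :: "'a::field poly"
  assumes \<iota>: "[[:0, 1:] * \<iota> = 1] (mod R)" and "R dvd reflect_poly G" and "[a = b] (mod G)"
  shows "[a \<circ>\<^sub>p \<iota> = b \<circ>\<^sub>p \<iota>] (mod R)"
proof -
  let ?d = "degree G"
  have "[([:0, 1:] * \<iota>) ^ ?d * G \<circ>\<^sub>p \<iota> = 1 * G \<circ>\<^sub>p \<iota>] (mod R)"
    by (intro cong_mult cong_refl) (use cong_pow[OF \<iota>, of ?d] in simp)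
  moreover have "([:0, 1:] * \<iota>) ^ ?d * G \<circ>\<^sub>p \<iota> = \<iota> ^ ?d * ([:0, 1:] ^ ?d * G \<circ>\<^sub>p \<iota>)"
    by (simp only: power_mult_distrib ac_simps)
  ultimately have "[G \<circ>\<^sub>p \<iota> = \<iota> ^ ?d * ([:0, 1:] ^ ?d * G \<circ>\<^sub>p \<iota>)] (mod R)"
    by (simp only: mult_1 cong_sym_eq)
  also have "[\<iota> ^ ?d * ([:0, 1:] ^ ?d * G \<circ>\<^sub>p \<iota>) = \<iota> ^ ?d * reflect_poly G] (mod R)"
    by (rule cong_mult[OF cong_refl cong_reflect_poly_pcompose[OF \<iota>]])
  also have "[\<iota> ^ ?d * reflect_poly G = 0] (mod R)"
    using assms(2) by (simp add: cong_0_iff)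
  finally have "R dvd G \<circ>\<^sub>p \<iota>" by (simp add: cong_0_iff)
  moreover have "G \<circ>\<^sub>p \<iota> dvd (a - b) \<circ>\<^sub>p \<iota>"
    using assms(3) by (intro pcompose_hom.hom_dvd) (simp add: cong_iff_dvd_diff)
  ultimately show ?thesis by (simp add: cong_iff_dvd_diff pcompose_diff dvd_trans)
qed

lemma pcompose_pcompose_inverse_x:
  fixes F \<iota> r :: "'a::field poly"
  assumes \<iota>: "[[:0, 1:] * \<iota> = 1] (mod F)" and F: "F dvd F \<circ>\<^sub>p \<iota>"
  shows "[(r \<circ>\<^sub>p \<iota>) \<circ>\<^sub>p \<iota> = r] (mod F)"
proof -
  have "F \<circ>\<^sub>p \<iota> dvd ([:0, 1:] * \<iota> - 1) \<circ>\<^sub>p \<iota>"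
    using \<iota> by (intro pcompose_hom.hom_dvd) (simp add: cong_iff_dvd_diff)
  then have "[\<iota> * (\<iota> \<circ>\<^sub>p \<iota>) = 1] (mod F)"
    using F by (simp add: cong_iff_dvd_diff pcompose_diff pcompose_mult dvd_trans)
  have "[\<iota> \<circ>\<^sub>p \<iota> = ([:0, 1:] * \<iota>) * (\<iota> \<circ>\<^sub>p \<iota>)] (mod F)"
    using cong_scalar_right[OF cong_sym[OF \<iota>]] by simp
  also have "([:0, 1:] * \<iota>) * (\<iota> \<circ>\<^sub>p \<iota>) = [:0, 1:] * (\<iota> * (\<iota> \<circ>\<^sub>p \<iota>))" by (simp add: ac_simps)
  also have "[\<dots> = [:0, 1:] * 1] (mod F)" by (intro cong_mult cong_refl) fact
  finally have "[r \<circ>\<^sub>p (\<iota> \<circ>\<^sub>p \<iota>) = r \<circ>\<^sub>p [:0, 1:]] (mod F)" by (intro cong_pcompose) simp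
  then show ?thesis by (simp add: pcompose_assoc)
qed

lemma pcompose_inverse_x_recip_poly:
  fixes g \<iota> :: "'a::field poly"
  assumes g: "coeff g 0 \<noteq> 0" and \<iota>: "[[:0, 1:] * \<iota> = 1] (mod g * recip_poly g)"
  shows "[a = b] (mod g) \<Longrightarrow> [a \<circ>\<^sub>p \<iota> = b \<circ>\<^sub>p \<iota>] (mod recip_poly g)"
    and "[a = b] (mod recip_poly g) \<Longrightarrow> [a \<circ>\<^sub>p \<iota> = b \<circ>\<^sub>p \<iota>] (mod g)"
    and "[(r \<circ>\<^sub>p \<iota>) \<circ>\<^sub>p \<iota> = r] (mod g)"
proof -
  have \<iota>g: "[[:0, 1:] * \<iota> = 1] (mod g)" and \<iota>g': "[[:0, 1:] * \<iota> = 1] (mod recip_poly g)"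
    using \<iota> by (auto intro: cong_dvd_modulus)
  have "recip_poly g dvd reflect_poly g" using g by (simp add: reflect_poly_eq_smult_recip_poly dvd_smult)
  with \<iota>g' show to_recip: "[a \<circ>\<^sub>p \<iota> = b \<circ>\<^sub>p \<iota>] (mod recip_poly g)" if "[a = b] (mod g)" for a b
    using that by (rule cong_pcompose_inverse_x)
  have "g dvd reflect_poly (recip_poly g)" using g by (rule dvd_reflect_poly_recip_poly)
  with \<iota>g show from_recip: "[a \<circ>\<^sub>p \<iota> = b \<circ>\<^sub>p \<iota>] (mod g)" if "[a = b] (mod recip_poly g)" for a b
    using that by (rule cong_pcompose_inverse_x)
  have "g dvd recip_poly g \<circ>\<^sub>p \<iota>" and "recip_poly g dvd g \<circ>\<^sub>p \<iota>"
    using from_recip[of "recip_poly g" 0] to_recip[of g 0] by (simp_all add: cong_0_iff)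
  from mult_dvd_mono[OF this] have "g * recip_poly g dvd (g * recip_poly g) \<circ>\<^sub>p \<iota>"
    by (simp add: pcompose_mult mult.commute)
  from pcompose_pcompose_inverse_x[OF \<iota> this] show "[(r \<circ>\<^sub>p \<iota>) \<circ>\<^sub>p \<iota> = r] (mod g)"
    by (rule cong_dvd_modulus) simp
qed

lemma cong_inverse_of_root_x:
  fixes g p :: "'a::field poly"
  assumes g: "irreducible g" "coeff g 0 \<noteq> 0" and "0 < M" and root: "[p ^ M = [:0, 1:]] (mod g)"
  obtains p' where "[p * p' = 1] (mod g)"
proof -
  have "\<not> g dvd p"
  proof
    assume "g dvd p"
    then have "g dvd p ^ M" using \<open>0 < M\<close> by (cases M) auto
    then have "g dvd [:0, 1:]" using root by (simp add: cong_dvd_iff)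
    then have "[:0, 1:] dvd g \<or> is_unit g" by (rule irreducibleD'[OF irreducible_x])
    then show False using irreducible_not_unit[OF g(1)] g(2) by (auto simp: x_dvd_iff_coeff_0)
  qed
  then have "coprime p g"
    by (subst coprime_commute) (rule irreducible_imp_coprime_poly[OF g(1)])
  then show thesis using that by (rule cong_inverse_poly)
qed

lemma exists_symplectic_root_poly:
  fixes g p \<iota> :: "'a::field poly"
  assumes g: "monic g" "irreducible g" "coeff g 0 \<noteq> 0" "g \<noteq> recip_poly g"
    and "0 < M" and root: "[p ^ M = [:0, 1:]] (mod g)"
    and \<iota>: "[[:0, 1:] * \<iota> = 1] (mod g * recip_poly g)"
  obtains P where "[P ^ M = [:0, 1:]] (mod g * recip_poly g)"
    and "[(P \<circ>\<^sub>p \<iota>) * P = 1] (mod g * recip_poly g)"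
proof -
  define g' where "g' = recip_poly g"
  note to_g' = pcompose_inverse_x_recip_poly(1)[OF g(3) \<iota>, folded g'_def]
  note to_g = pcompose_inverse_x_recip_poly(2)[OF g(3) \<iota>, folded g'_def]
  note involution = pcompose_inverse_x_recip_poly(3)[OF g(3) \<iota>]
  have \<iota>g': "[[:0, 1:] * \<iota> = 1] (mod g')" using \<iota> by (auto simp: g'_def intro: cong_dvd_modulus)
  have cop: "coprime g g'" unfolding g'_def using g by (rule coprime_recip_poly)
  obtain p' where pp': "[p * p' = 1] (mod g)" using g(2,3) \<open>0 < M\<close> root by (rule cong_inverse_of_root_x)
  \<comment> \<open>Substituting \<open>\<iota>\<close> exchanges the moduli \<open>g\<close> and \<open>g'\<close>, so \<open>P(\<iota>)\<close> is \<open>p'\<close> modulo \<open>g\<close> and \<open>p(\<iota>)\<close> modulo \<open>g'\<close>.\<close>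
  obtain P where Pg: "[P = p] (mod g)" and Pg': "[P = p' \<circ>\<^sub>p \<iota>] (mod g')"
    using cop by (rule poly_chinese_remainder)
  have P\<iota>g: "[P \<circ>\<^sub>p \<iota> = p'] (mod g)" using to_g[OF Pg'] involution by (rule cong_trans)
  have "[[:0, 1:] * p' ^ M = (p * p') ^ M] (mod g)"
    using cong_mult[OF cong_sym[OF root] cong_refl[of "p' ^ M"]] by (simp add: power_mult_distrib)
  also have "[(p * p') ^ M = 1] (mod g)" using cong_pow[OF pp'] by simp
  finally have "[\<iota> * (p' \<circ>\<^sub>p \<iota>) ^ M = 1] (mod g')"
    using to_g' by (fastforce simp: pcompose_mult pcompose_hom.hom_power)
  then have "[[:0, 1:] * (\<iota> * (p' \<circ>\<^sub>p \<iota>) ^ M) = [:0, 1:] * 1] (mod g')"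
    by (rule cong_mult[OF cong_refl])
  moreover have "[P ^ M = ([:0, 1:] * \<iota>) * (p' \<circ>\<^sub>p \<iota>) ^ M] (mod g')"
    using cong_mult[OF cong_sym[OF \<iota>g'] cong_pow[OF Pg', of M]] by simp
  ultimately have "[P ^ M = [:0, 1:]] (mod g')" by (simp add: ac_simps cong_trans)
  moreover have "[P ^ M = [:0, 1:]] (mod g)" using cong_pow[OF Pg] root by (rule cong_trans)
  moreover have "[(P \<circ>\<^sub>p \<iota>) * P = 1] (mod g)"
    using cong_trans[OF cong_mult[OF P\<iota>g Pg]] pp' by (simp add: mult.commute)
  moreover have "[(P \<circ>\<^sub>p \<iota>) * P = 1] (mod g')"
    using cong_trans[OF cong_mult[OF to_g'[OF Pg] Pg']] to_g'[OF pp'] by (simp add: pcompose_mult)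
  ultimately show thesis using cop by (intro that; fold g'_def; intro cong_mult_modulus_poly)
qed

section \<open>Evaluating polynomials at square matrices\<close>

definition poly_mat :: "'a::comm_ring_1 poly \<Rightarrow> 'a mat \<Rightarrow> 'a mat" where
  "poly_mat p A = fold_coeffs (\<lambda>a B. a \<cdot>\<^sub>m 1\<^sub>m (dim_row A) + A * B) p (0\<^sub>m (dim_row A) (dim_row A))"

lemma smult_one_mat [simp]: "1 \<cdot>\<^sub>m B = (B :: 'a::comm_ring_1 mat)"
  by (auto intro!: eq_matI)

lemma smult_smult_mat [simp]: "a \<cdot>\<^sub>m (b \<cdot>\<^sub>m B) = (a * b) \<cdot>\<^sub>m (B :: 'a::comm_ring_1 mat)"
  by (auto intro!: eq_matI)

lemma transpose_smult_one_mat [simp]: "transpose_mat (a \<cdot>\<^sub>m 1\<^sub>m n) = a \<cdot>\<^sub>m 1\<^sub>m n"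
  by (auto intro!: eq_matI)

context
  fixes n :: nat
begin

text \<open>Instances of the matrix laws at dimension \<open>n\<close>: the carrier premises of the general laws
  mention dimensions absent from the equations, which the simplifier cannot instantiate.\<close>

private lemmas sq_mat_algebra =
  mult_add_distrib_mat[of _ n n _ n] add_mult_distrib_mat[of _ n n _ _ n]
  assoc_mult_mat[of _ n n _ n _ n] mult_smult_distrib[of _ n n _ n] mult_smult_assoc_mat[of _ n n _ n]
  add_smult_distrib_left_mat[of _ n n] add_smult_distrib_right_mat[of _ n n]
  left_mult_one_mat[of _ n n] right_mult_one_mat[of _ n n]
  left_mult_zero_mat[of _ n n n] right_mult_zero_mat[of _ n n n]
  left_add_zero_mat[of _ n n] right_add_zero_mat[of _ n n]
  transpose_add[of _ n n] transpose_mult[of _ n n _ n] mult_carrier_mat[of _ n n _ n]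

private lemma add_add_swap_mat:
  "B \<in> carrier_mat n n \<Longrightarrow> C \<in> carrier_mat n n \<Longrightarrow> D \<in> carrier_mat n n \<Longrightarrow> E \<in> carrier_mat n n
    \<Longrightarrow> (B + C) + (D + E) = (B + D) + (C + (E :: 'a::comm_ring_1 mat))"
  by (auto simp: algebra_simps intro!: eq_matI)

private lemma smult_zero_mat: "B \<in> carrier_mat n n \<Longrightarrow> 0 \<cdot>\<^sub>m B = (0\<^sub>m n n :: 'a::comm_ring_1 mat)"
  by (auto intro!: eq_matI)

lemma poly_mat_0 [simp]: "A \<in> carrier_mat n n \<Longrightarrow> poly_mat 0 A = 0\<^sub>m n n"
  by (simp add: poly_mat_def)

lemma poly_mat_pCons:
  assumes A: "A \<in> carrier_mat n n"
  shows "poly_mat (pCons a p) A = a \<cdot>\<^sub>m 1\<^sub>m n + A * poly_mat p A"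
proof (cases "p = 0 \<and> a = 0")
  case True
  then show ?thesis using A by (simp add: sq_mat_algebra smult_zero_mat)
next
  case False
  then show ?thesis using A
    by (auto simp: poly_mat_def fold_coeffs_pCons_coeff_not_0_eq fold_coeffs_pCons_not_0_0_eq)
qed

lemma poly_mat_carrier [simp]: "A \<in> carrier_mat n n \<Longrightarrow> poly_mat p A \<in> carrier_mat n n"
  by (induction p) (simp_all add: poly_mat_pCons)

lemma poly_mat_const: "A \<in> carrier_mat n n \<Longrightarrow> poly_mat [:c:] A = c \<cdot>\<^sub>m 1\<^sub>m n"
  by (simp add: poly_mat_pCons sq_mat_algebra)

lemma poly_mat_1 [simp]: "A \<in> carrier_mat n n \<Longrightarrow> poly_mat 1 A = 1\<^sub>m n"
  using poly_mat_const[of A 1] by (simp add: one_pCons[symmetric])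

lemma poly_mat_x [simp]: "A \<in> carrier_mat n n \<Longrightarrow> poly_mat [:0, 1:] A = A"
  using poly_mat_1[of A] by (simp add: poly_mat_pCons sq_mat_algebra one_pCons smult_zero_mat)

lemma poly_mat_add:
  assumes A: "A \<in> carrier_mat n n"
  shows "poly_mat (p + q) A = poly_mat p A + poly_mat q A"
proof (induction p arbitrary: q)
  case (pCons a p)
  obtain b q' where q: "q = pCons b q'" by (rule pCons_cases)
  have "poly_mat (pCons a p + q) A = (a + b) \<cdot>\<^sub>m 1\<^sub>m n + (A * poly_mat p A + A * poly_mat q' A)"
    using A by (simp add: q poly_mat_pCons pCons.IH sq_mat_algebra)
  also have "\<dots> = poly_mat (pCons a p) A + poly_mat q A"
    using A by (simp add: q poly_mat_pCons sq_mat_algebra add_add_swap_mat)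
  finally show ?case .
qed (use A in simp)

lemma poly_mat_smult:
  assumes A: "A \<in> carrier_mat n n"
  shows "poly_mat (Polynomial.smult c p) A = c \<cdot>\<^sub>m poly_mat p A"
proof (induction p)
  case (pCons a p)
  then show ?case using A by (simp add: poly_mat_pCons sq_mat_algebra)
qed (use A in \<open>simp add: smult_zero_mat\<close>)

lemma poly_mat_mult:
  assumes A: "A \<in> carrier_mat n n"
  shows "poly_mat (p * q) A = poly_mat p A * poly_mat q A"
proof (induction p)
  case (pCons a p)
  have "poly_mat (pCons a p * q) A = a \<cdot>\<^sub>m poly_mat q A + A * (poly_mat p A * poly_mat q A)"
    using A by (simp add: poly_mat_add poly_mat_smult poly_mat_pCons pCons.IH sq_mat_algebra smult_zero_mat)
  also have "\<dots> = poly_mat (pCons a p) A * poly_mat q A"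
    using A by (simp add: poly_mat_pCons sq_mat_algebra)
  finally show ?case .
qed (use A in \<open>simp add: sq_mat_algebra\<close>)

lemma poly_mat_power:
  assumes A: "A \<in> carrier_mat n n"
  shows "poly_mat (p ^ k) A = poly_mat p A ^\<^sub>m k"
proof (induction k)
  case (Suc k)
  have "poly_mat (p ^ Suc k) A = poly_mat (p ^ k) A * poly_mat p A"
    by (simp only: power_Suc2 poly_mat_mult[OF A])
  then show ?case by (simp add: Suc.IH)
qed (use A carrier_matD(1)[OF poly_mat_carrier[OF A, of p]] in simp)

lemma poly_mat_commute:
  assumes A: "A \<in> carrier_mat n n" and B: "B \<in> carrier_mat n n" and AB: "A * B = B * A"
  shows "poly_mat p A * B = B * poly_mat p A"
proof (induction p)
  case (pCons a p)
  have "poly_mat (pCons a p) A * B = a \<cdot>\<^sub>m B + A * (poly_mat p A * B)"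
    using A B by (simp add: poly_mat_pCons sq_mat_algebra)
  also have "\<dots> = a \<cdot>\<^sub>m B + (A * B) * poly_mat p A"
    using A B by (simp add: pCons.IH sq_mat_algebra)
  also have "\<dots> = B * poly_mat (pCons a p) A"
    using A B by (simp add: AB poly_mat_pCons sq_mat_algebra)
  finally show ?case .
qed (use A B in \<open>simp add: sq_mat_algebra\<close>)

lemma poly_mat_pcompose:
  assumes A: "A \<in> carrier_mat n n"
  shows "poly_mat (p \<circ>\<^sub>p q) A = poly_mat p (poly_mat q A)"
proof (induction p)
  case (pCons a p)
  then show ?case
    using A by (simp add: pcompose_pCons poly_mat_add poly_mat_const poly_mat_mult poly_mat_pCons)
qed (use A in simp)

lemma poly_mat_transpose:
  assumes A: "A \<in> carrier_mat n n"
  shows "transpose_mat (poly_mat p A) = poly_mat p (transpose_mat A)"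
proof (induction p)
  case (pCons a p)
  then show ?case
    using A poly_mat_commute[of "transpose_mat A" "transpose_mat A" p]
    by (simp add: poly_mat_pCons sq_mat_algebra)
qed (use A in simp)

end

lemma poly_mat_cong:
  fixes A :: "'a::field mat"
  assumes A: "A \<in> carrier_mat n n" and f: "poly_mat f A = 0\<^sub>m n n" and "[r = s] (mod f)"
  shows "poly_mat r A = poly_mat s A"
proof -
  have "f dvd r - s" using assms(3) by (simp add: cong_iff_dvd_diff)
  then obtain u where "r - s = f * u" by (rule dvdE)
  then have "r = s + f * u" by (simp add: algebra_simps)
  then show ?thesis
    using A by (simp add: poly_mat_add poly_mat_mult f left_mult_zero_mat[of _ n n n] right_add_zero_mat[of _ n n])
qed

section \<open>The Cayley--Hamilton theorem\<close>

interpretation const_poly_hom: comm_ring_hom "\<lambda>a :: 'a::comm_ring_1. [:a:]"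
  by unfold_locales simp_all

lemma index_mult_mat_sum:
  assumes "X \<in> carrier_mat n m" and "Y \<in> carrier_mat m k" and "i < n" and "j < k"
  shows "(X * Y) $$ (i, j) = (\<Sum>l<m. X $$ (i, l) * Y $$ (l, j))"
  using assms by (auto simp: scalar_prod_def atLeast0LessThan intro!: sum.cong)

abbreviation const_poly_mat :: "'a::comm_ring_1 mat \<Rightarrow> 'a poly mat" where
  "const_poly_mat \<equiv> map_mat (\<lambda>a. [:a:])"

context
  fixes A :: "'a::comm_ring_1 mat" and n :: nat
  assumes A: "A \<in> carrier_mat n n"
begin

lemma char_poly_matrix_add_const: "char_poly_matrix A + const_poly_mat A = [:0, 1:] \<cdot>\<^sub>m 1\<^sub>m n"
  using A by (auto simp: char_poly_matrix_def intro!: eq_matI)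

private lemma add_rearrange_mat:
  fixes W X Y Z :: "'b::comm_ring_1 mat"
  assumes "W \<in> carrier_mat n n" "X \<in> carrier_mat n n" "Y \<in> carrier_mat n n" "Z \<in> carrier_mat n n"
  shows "(W + X) + (Y + Z) = W + (X + Z) + Y"
  using assms by (auto simp: algebra_simps intro!: eq_matI)

lemma char_poly_matrix_quotient_pCons:
  assumes Q: "Q \<in> carrier_mat n n"
    and IH: "s \<cdot>\<^sub>m 1\<^sub>m n = char_poly_matrix A * Q + const_poly_mat (poly_mat s A)"
  shows "pCons a s \<cdot>\<^sub>m 1\<^sub>m n = char_poly_matrix A * ([:0, 1:] \<cdot>\<^sub>m Q + const_poly_mat (poly_mat s A))
           + const_poly_mat (poly_mat (pCons a s) A)"
proof -
  define S where "S = const_poly_mat (poly_mat s A)"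
  have S: "S \<in> carrier_mat n n" using A by (simp add: S_def)
  have P: "char_poly_matrix A \<in> carrier_mat n n" using A by simp
  have LA: "const_poly_mat A \<in> carrier_mat n n" using A by simp
  have key: "char_poly_matrix A * S + const_poly_mat A * S = [:0, 1:] \<cdot>\<^sub>m S"
    using add_mult_distrib_mat[OF P LA S] char_poly_matrix_add_const
      mult_smult_assoc_mat[OF one_carrier_mat S] left_mult_one_mat[OF S] by simp
  have "const_poly_mat (A * poly_mat s A) = const_poly_mat A * S"
    unfolding S_def using A poly_mat_carrier[OF A] by (rule const_poly_hom.mat_hom_mult)
  moreover have "const_poly_mat (a \<cdot>\<^sub>m 1\<^sub>m n + A * poly_mat s A)
      = [:a:] \<cdot>\<^sub>m 1\<^sub>m n + const_poly_mat (A * poly_mat s A)"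
    using A carrier_matD[OF poly_mat_carrier[OF A, of s]] by (auto intro!: eq_matI)
  ultimately have step: "const_poly_mat (poly_mat (pCons a s) A) = [:a:] \<cdot>\<^sub>m 1\<^sub>m n + const_poly_mat A * S"
    using A by (simp add: poly_mat_pCons)
  have "char_poly_matrix A * ([:0, 1:] \<cdot>\<^sub>m Q + S) + const_poly_mat (poly_mat (pCons a s) A)
      = ([:0, 1:] \<cdot>\<^sub>m (char_poly_matrix A * Q) + char_poly_matrix A * S) + ([:a:] \<cdot>\<^sub>m 1\<^sub>m n + const_poly_mat A * S)"
    using P Q S by (simp add: step mult_add_distrib_mat[OF P smult_carrier_mat[OF Q] S] mult_smult_distrib[OF P Q])
  also have "\<dots> = [:0, 1:] \<cdot>\<^sub>m (char_poly_matrix A * Q) + (char_poly_matrix A * S + const_poly_mat A * S) + [:a:] \<cdot>\<^sub>m 1\<^sub>m n"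
    using mult_carrier_mat[OF P Q] mult_carrier_mat[OF P S] mult_carrier_mat[OF LA S]
    by (intro add_rearrange_mat) auto
  also have "\<dots> = [:0, 1:] \<cdot>\<^sub>m (s \<cdot>\<^sub>m 1\<^sub>m n) + [:a:] \<cdot>\<^sub>m 1\<^sub>m n"
    using mult_carrier_mat[OF P Q] S
    by (simp add: key IH[folded S_def] add_smult_distrib_left_mat[of _ n n])
  also have "\<dots> = pCons a s \<cdot>\<^sub>m 1\<^sub>m n"
    by (auto intro!: eq_matI)
  finally show ?thesis by (simp add: S_def)
qed

text \<open>The matrix analogue of \<open>r(x) - r(a) = (x - a) q(x)\<close>.\<close>

lemma exists_char_poly_matrix_quotient:
  obtains Q where "Q \<in> carrier_mat n n" and "r \<cdot>\<^sub>m 1\<^sub>m n = char_poly_matrix A * Q + const_poly_mat (poly_mat r A)"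
proof -
  have "\<exists>Q \<in> carrier_mat n n. r \<cdot>\<^sub>m 1\<^sub>m n = char_poly_matrix A * Q + const_poly_mat (poly_mat r A)"
  proof (induction r)
    case 0
    have "char_poly_matrix A * 0\<^sub>m n n = 0\<^sub>m n n" using A by (simp add: right_mult_zero_mat[of _ n n n])
    then have "(0 :: 'a poly) \<cdot>\<^sub>m 1\<^sub>m n = char_poly_matrix A * 0\<^sub>m n n + const_poly_mat (poly_mat 0 A)"
      using A by (auto intro!: eq_matI)
    then show ?case by (intro bexI[of _ "0\<^sub>m n n"]) auto
  next
    case (pCons a s)
    then obtain Q where Q: "Q \<in> carrier_mat n n"
      and IH: "s \<cdot>\<^sub>m 1\<^sub>m n = char_poly_matrix A * Q + const_poly_mat (poly_mat s A)" by auto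
    show ?case
      using char_poly_matrix_quotient_pCons[OF Q IH] Q A
      by (intro bexI[of _ "[:0, 1:] \<cdot>\<^sub>m Q + const_poly_mat (poly_mat s A)"]) auto
  qed
  then show thesis using that by auto
qed

end

lemma add_diff_cancel_left_mat:
  "X \<in> carrier_mat n m \<Longrightarrow> Y \<in> carrier_mat n m \<Longrightarrow> (X + Y) - X = (Y :: 'a::ab_group_add mat)"
  by (auto intro!: eq_matI)

context
  fixes A :: "'a::comm_ring_1 mat" and n :: nat
  assumes A: "A \<in> carrier_mat n n"
begin

lemma coeff_char_poly_matrix_mult:
  assumes R: "R \<in> carrier_mat n n" and ij: "i < n" "j < n"
  shows "coeff ((char_poly_matrix A * R) $$ (i, j)) k
       = (if k = 0 then 0 else coeff (R $$ (i, j)) (k - 1)) - (\<Sum>l<n. A $$ (i, l) * coeff (R $$ (l, j)) k)"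
proof -
  have "(char_poly_matrix A * R) $$ (i, j) = (\<Sum>l<n. char_poly_matrix A $$ (i, l) * R $$ (l, j))"
    using A R ij by (intro index_mult_mat_sum) auto
  also have "\<dots> = (\<Sum>l<n. (if i = l then [:0, 1:] * R $$ (l, j) else 0) - [:A $$ (i, l):] * R $$ (l, j))"
    using A ij by (intro sum.cong) (auto simp: char_poly_matrix_def algebra_simps)
  also have "\<dots> = [:0, 1:] * R $$ (i, j) - (\<Sum>l<n. [:A $$ (i, l):] * R $$ (l, j))"
    using ij by (simp add: sum_subtractf)
  finally show ?thesis
    by (cases k) (simp_all add: coeff_sum)
qed

lemma char_poly_matrix_mult_eq_const_imp_zero:
  assumes R: "R \<in> carrier_mat n n" and B: "B \<in> carrier_mat n n"
    and eq: "char_poly_matrix A * R = const_poly_mat B"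
  shows "B = 0\<^sub>m n n"
proof -
  \<comment> \<open>\<open>C k\<close> is the coefficient of \<open>x\<^sup>k\<close> in \<open>R\<close>; comparing coefficients gives \<open>C k = A C (k + 1)\<close>.\<close>
  define C where "C k = mat n n (\<lambda>(i, j). coeff (R $$ (i, j)) k)" for k
  have C: "C k \<in> carrier_mat n n" for k by (simp add: C_def)
  have coeff_eq: "coeff ([:B $$ (i, j):]) k = (if k = 0 then 0 else C (k - 1) $$ (i, j)) - (A * C k) $$ (i, j)"
    if "i < n" "j < n" for i j k
  proof -
    have "(A * C k) $$ (i, j) = (\<Sum>l<n. A $$ (i, l) * coeff (R $$ (l, j)) k)"
      using that by (subst index_mult_mat_sum[OF A C that]) (auto simp: C_def intro!: sum.cong)
    then show ?thesis
      using coeff_char_poly_matrix_mult[OF R that, of k] arg_cong[OF eq, of "\<lambda>X. X $$ (i, j)"] B that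
      by (simp add: C_def)
  qed
  have dim_C: "dim_row (C k) = n" "dim_col (C k) = n" for k by (simp_all add: C_def)
  have shift: "C k = A * C (Suc k)" for k
    using coeff_eq[of _ _ "Suc k"] A dim_C by (intro eq_matI) (simp_all del: index_mult_mat(1))
  have iter: "C k = A ^\<^sub>m m * C (k + m)" for k m
  proof (induction m)
    case 0 then show ?case using carrier_matD[OF A] by (simp add: left_mult_one_mat[OF C])
  next
    case (Suc m)
    have "C k = A ^\<^sub>m m * (A * C (Suc (k + m)))" using Suc.IH shift[of "k + m"] by simp
    also have "\<dots> = A ^\<^sub>m Suc m * C (k + Suc m)"
      using A C by (simp add: assoc_mult_mat[of _ n n _ n _ n])
    finally show ?case .
  qed
  define N where "N = Suc (\<Sum>i<n. \<Sum>j<n. degree (R $$ (i, j)))"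
  have "degree (R $$ (i, j)) < N" if "i < n" "j < n" for i j
  proof -
    have "degree (R $$ (i, j)) \<le> (\<Sum>j<n. degree (R $$ (i, j)))" using that by (intro member_le_sum) auto
    also have "\<dots> \<le> (\<Sum>i<n. \<Sum>j<n. degree (R $$ (i, j)))" using that by (intro member_le_sum) auto
    finally show ?thesis by (simp add: N_def)
  qed
  then have "C N = 0\<^sub>m n n" by (auto simp: C_def coeff_eq_0 intro!: eq_matI)
  then have "C 0 = 0\<^sub>m n n" using iter[of 0 N] right_mult_zero_mat[OF pow_carrier_mat[OF A]] by simp
  then show ?thesis using coeff_eq[of _ _ 0] A B by (intro eq_matI) auto
qed

theorem cayley_hamilton: "poly_mat (char_poly A) A = 0\<^sub>m n n"
proof -
  let ?P = "char_poly_matrix A"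
  have P: "?P \<in> carrier_mat n n" using A by simp
  obtain Q where Q: "Q \<in> carrier_mat n n"
    and dec: "char_poly A \<cdot>\<^sub>m 1\<^sub>m n = ?P * Q + const_poly_mat (poly_mat (char_poly A) A)"
    using exists_char_poly_matrix_quotient[OF A] .
  have "?P * adj_mat ?P = char_poly A \<cdot>\<^sub>m 1\<^sub>m n"
    using adj_mat(2)[OF P] by (simp add: char_poly_def)
  then have "?P * (adj_mat ?P - Q) = (?P * Q + const_poly_mat (poly_mat (char_poly A) A)) - ?P * Q"
    using mult_minus_distrib_mat[OF P adj_mat(1)[OF P] Q] by (simp add: dec)
  also have "\<dots> = const_poly_mat (poly_mat (char_poly A) A)"
    using mult_carrier_mat[OF P Q] A by (intro add_diff_cancel_left_mat) auto
  finally have "?P * (adj_mat ?P - Q) = const_poly_mat (poly_mat (char_poly A) A)" .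
  then show ?thesis
    using A adj_mat(1)[OF P] Q by (intro char_poly_matrix_mult_eq_const_imp_zero[of "adj_mat ?P - Q"]) auto
qed

lemma char_poly_dvd_power_if_poly_mat_eq_0:
  assumes "poly_mat r A = 0\<^sub>m n n"
  shows "char_poly A dvd r ^ n"
proof -
  have P: "char_poly_matrix A \<in> carrier_mat n n" using A by simp
  obtain Q where Q: "Q \<in> carrier_mat n n"
    and dec: "r \<cdot>\<^sub>m 1\<^sub>m n = char_poly_matrix A * Q + const_poly_mat (poly_mat r A)"
    using exists_char_poly_matrix_quotient[OF A] .
  have "const_poly_mat (poly_mat r A) = 0\<^sub>m n n" using assms by (auto intro!: eq_matI)
  then have "r \<cdot>\<^sub>m 1\<^sub>m n = char_poly_matrix A * Q"
    using dec mult_carrier_mat[OF P Q] by simp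
  from arg_cong[of _ _ det, OF this] have "r ^ n = char_poly A * det Q"
    by (simp add: det_mult[OF P Q] char_poly_def)
  then show ?thesis by (rule dvdI)
qed

end

section \<open>Kernels of $g(A)$ for the irreducible factors $g$ of the characteristic polynomial\<close>

lemma card_carrier_vec: "card (carrier_vec n :: 'a::finite vec set) = card (UNIV :: 'a set) ^ n"
proof -
  have "bij_betw list_of_vec (carrier_vec n :: 'a vec set) {xs. length xs = n}"
  proof (rule bij_betw_byWitness[where f' = vec_of_list])
    show "\<forall>v \<in> carrier_vec n. vec_of_list (list_of_vec v) = (v :: 'a vec)" by (simp add: vec_list)
    show "\<forall>xs \<in> {xs. length xs = n}. list_of_vec (vec_of_list xs) = (xs :: 'a list)" by (simp add: list_vec)
    show "list_of_vec ` carrier_vec n \<subseteq> {xs :: 'a list. length xs = n}" by auto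
    show "vec_of_list ` {xs. length xs = n} \<subseteq> (carrier_vec n :: 'a vec set)"
      by (auto intro: carrier_vecI)
  qed
  then have "card (carrier_vec n :: 'a vec set) = card {xs :: 'a list. length xs = n}"
    by (rule bij_betw_same_card)
  then show ?thesis using card_lists_length_eq[of "UNIV :: 'a set" n] by simp
qed

lemma finite_carrier_vec: "finite (carrier_vec n :: 'a::finite vec set)"
proof (rule card_ge_0_finite)
  have "0 < card (UNIV :: 'a set)" by (rule finite_UNIV_card_ge_0) simp
  then show "0 < card (carrier_vec n :: 'a vec set)" by (simp add: card_carrier_vec)
qed

lemma exists_mult_mat_vec_neq_0:
  fixes X :: "'a::comm_ring_1 mat"
  assumes X: "X \<in> carrier_mat n n" and "X \<noteq> 0\<^sub>m n n"
  obtains w where "w \<in> carrier_vec n" and "X *\<^sub>v w \<noteq> 0\<^sub>v n"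
proof -
  have "\<exists>i<n. \<exists>j<n. X $$ (i, j) \<noteq> 0"
  proof (rule ccontr)
    assume "\<not> ?thesis"
    then have "X = 0\<^sub>m n n" using X by (auto intro!: eq_matI)
    with assms(2) show False ..
  qed
  then obtain i j where ij: "i < n" "j < n" "X $$ (i, j) \<noteq> 0" by blast
  have "(X *\<^sub>v unit_vec n j) $ i = X $$ (i, j)" using X ij by simp
  then have "X *\<^sub>v unit_vec n j \<noteq> 0\<^sub>v n" using ij by auto
  then show thesis by (intro that[of "unit_vec n j"]) simp
qed

lemma mult_mat_vec_zero: "A \<in> carrier_mat n m \<Longrightarrow> A *\<^sub>v 0\<^sub>v m = (0\<^sub>v n :: 'a::semiring_0 vec)"
  by (auto intro!: eq_vecI)

lemma zero_mat_mult_vec [simp]: "v \<in> carrier_vec m \<Longrightarrow> 0\<^sub>m n m *\<^sub>v v = (0\<^sub>v n :: 'a::semiring_0 vec)"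
  by (auto intro!: eq_vecI)

context
  fixes A :: "'a::field mat" and n :: nat
  assumes A: "A \<in> carrier_mat n n"
begin

lemma poly_mat_diff: "poly_mat (p - q) A = poly_mat p A - poly_mat q A"
proof -
  have "poly_mat p A = poly_mat (p - q) A + poly_mat q A"
    using poly_mat_add[OF A, of "p - q" q] by simp
  then show ?thesis
    using A carrier_matD[OF poly_mat_carrier[OF A, of "p - q"]] carrier_matD[OF poly_mat_carrier[OF A, of q]]
    by (auto intro!: eq_matI)
qed

lemma poly_mat_mult_mult_vec:
  "v \<in> carrier_vec n \<Longrightarrow> poly_mat (p * q) A *\<^sub>v v = poly_mat p A *\<^sub>v (poly_mat q A *\<^sub>v v)"
  using A by (simp add: poly_mat_mult assoc_mult_mat_vec[OF poly_mat_carrier[OF A] poly_mat_carrier[OF A]])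

lemma poly_mat_add_mult_vec:
  "v \<in> carrier_vec n \<Longrightarrow> poly_mat (p + q) A *\<^sub>v v = poly_mat p A *\<^sub>v v + poly_mat q A *\<^sub>v v"
  using A by (simp add: poly_mat_add add_mult_distrib_mat_vec[OF poly_mat_carrier[OF A] poly_mat_carrier[OF A]])

lemma poly_mat_diff_mult_vec:
  "v \<in> carrier_vec n \<Longrightarrow> poly_mat (p - q) A *\<^sub>v v = poly_mat p A *\<^sub>v v - poly_mat q A *\<^sub>v v"
  using A by (simp add: poly_mat_diff minus_mult_distrib_mat_vec[OF poly_mat_carrier[OF A] poly_mat_carrier[OF A]])

lemma poly_mat_mult_vec_eq_0_iff_dvd:
  assumes v: "v \<in> carrier_vec n" "v \<noteq> 0\<^sub>v n"
    and g: "irreducible g" and gv: "poly_mat g A *\<^sub>v v = 0\<^sub>v n"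
  shows "poly_mat r A *\<^sub>v v = 0\<^sub>v n \<longleftrightarrow> g dvd r"
proof
  assume rv: "poly_mat r A *\<^sub>v v = 0\<^sub>v n"
  show "g dvd r"
  proof (rule ccontr)
    assume "\<not> g dvd r"
    with g have "coprime g r" by (rule irreducible_imp_coprime_poly)
    then obtain u t where ut: "u * g + t * r = 1" by (rule poly_bezout)
    have "v = poly_mat (u * g + t * r) A *\<^sub>v v" using A v by (simp add: ut)
    also have "\<dots> = poly_mat u A *\<^sub>v (poly_mat g A *\<^sub>v v) + poly_mat t A *\<^sub>v (poly_mat r A *\<^sub>v v)"
      using v by (simp only: poly_mat_add_mult_vec poly_mat_mult_mult_vec)
    also have "\<dots> = 0\<^sub>v n" by (simp add: gv rv mult_mat_vec_zero[OF poly_mat_carrier[OF A]])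
    finally show False using v(2) by contradiction
  qed
next
  assume "g dvd r"
  then obtain u where "r = g * u" by (rule dvdE)
  then have "r = u * g" by (simp add: mult.commute)
  then show "poly_mat r A *\<^sub>v v = 0\<^sub>v n" using A v by (simp add: poly_mat_mult_mult_vec gv mult_mat_vec_zero[OF poly_mat_carrier[OF A]])
qed

lemma poly_mat_mult_vec_eq_iff_dvd:
  assumes v: "v \<in> carrier_vec n" "v \<noteq> 0\<^sub>v n"
    and g: "irreducible g" and gv: "poly_mat g A *\<^sub>v v = 0\<^sub>v n"
  shows "poly_mat r A *\<^sub>v v = poly_mat s A *\<^sub>v v \<longleftrightarrow> g dvd r - s"
proof -
  have "poly_mat (r - s) A *\<^sub>v v = poly_mat r A *\<^sub>v v - poly_mat s A *\<^sub>v v"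
    using v(1) by (rule poly_mat_diff_mult_vec)
  moreover have "x - y = 0\<^sub>v n \<longleftrightarrow> x = y" if "x \<in> carrier_vec n" "y \<in> carrier_vec n" for x y :: "'a vec"
    using that by (auto simp: vec_eq_iff)
  ultimately show ?thesis
    using poly_mat_mult_vec_eq_0_iff_dvd[OF v g gv, of "r - s"]
      mult_mat_vec_carrier[OF poly_mat_carrier[OF A] v(1)] by simp
qed

lemma exists_kernel_vector:
  assumes char: "char_poly A = g * h" and g: "prime_elem g" and gh: "\<not> g dvd h"
  obtains v where "v \<in> carrier_vec n" and "v \<noteq> 0\<^sub>v n" and "poly_mat g A *\<^sub>v v = 0\<^sub>v n"
proof -
  have "poly_mat h A \<noteq> 0\<^sub>m n n"
  proof
    assume "poly_mat h A = 0\<^sub>m n n"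
    then have "g dvd h ^ n" using char_poly_dvd_power_if_poly_mat_eq_0[OF A] char
      by (metis dvd_mult_left)
    with g gh show False by (blast dest: prime_elem_dvd_power)
  qed
  then obtain w where w: "w \<in> carrier_vec n" "poly_mat h A *\<^sub>v w \<noteq> 0\<^sub>v n"
    using A by (auto elim: exists_mult_mat_vec_neq_0[OF poly_mat_carrier])
  have "poly_mat g A *\<^sub>v (poly_mat h A *\<^sub>v w) = poly_mat (char_poly A) A *\<^sub>v w"
    using w by (simp add: char poly_mat_mult_mult_vec)
  also have "\<dots> = 0\<^sub>v n" using A w by (simp add: cayley_hamilton)
  finally show thesis
    using w mult_mat_vec_carrier[OF poly_mat_carrier[OF A] w(1)] by (intro that[of "poly_mat h A *\<^sub>v w"])
qed

end

lemma poly_mat_mult_vec_add_kernel: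
  fixes A :: "'a::field mat"
  assumes A: "A \<in> carrier_mat n n" and v: "v \<in> carrier_vec n" and w: "w \<in> carrier_vec n"
    and gv: "poly_mat g A *\<^sub>v v = 0\<^sub>v n"
  shows "poly_mat g A *\<^sub>v (poly_mat s A *\<^sub>v v + poly_mat t A *\<^sub>v w) = poly_mat (g * t) A *\<^sub>v w"
    and "poly_mat g A *\<^sub>v (poly_mat t A *\<^sub>v w + poly_mat s A *\<^sub>v v) = poly_mat (g * t) A *\<^sub>v w"
proof -
  have sv: "poly_mat s A *\<^sub>v v \<in> carrier_vec n" and tw: "poly_mat t A *\<^sub>v w \<in> carrier_vec n"
    using mult_mat_vec_carrier[OF poly_mat_carrier[OF A]] v w by auto
  have "poly_mat g A *\<^sub>v (poly_mat s A *\<^sub>v v) = poly_mat s A *\<^sub>v (poly_mat g A *\<^sub>v v)"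
    using poly_mat_mult_mult_vec[OF A v, of g s] poly_mat_mult_mult_vec[OF A v, of s g]
    by (simp add: mult.commute)
  also have "\<dots> = 0\<^sub>v n" by (simp add: gv mult_mat_vec_zero[OF poly_mat_carrier[OF A]])
  finally have "poly_mat g A *\<^sub>v (poly_mat s A *\<^sub>v v) = 0\<^sub>v n" .
  moreover have "poly_mat g A *\<^sub>v (poly_mat t A *\<^sub>v w) \<in> carrier_vec n"
    using mult_mat_vec_carrier[OF poly_mat_carrier[OF A] tw] .
  ultimately show "poly_mat g A *\<^sub>v (poly_mat s A *\<^sub>v v + poly_mat t A *\<^sub>v w) = poly_mat (g * t) A *\<^sub>v w"
    and "poly_mat g A *\<^sub>v (poly_mat t A *\<^sub>v w + poly_mat s A *\<^sub>v v) = poly_mat (g * t) A *\<^sub>v w"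
    by (simp_all add: mult_add_distrib_mat_vec[OF poly_mat_carrier[OF A] sv tw]
        mult_add_distrib_mat_vec[OF poly_mat_carrier[OF A] tw sv] poly_mat_mult_mult_vec[OF A w])
qed

lemma poly_mat_kernels_inj:
  fixes A :: "'a::field mat"
  assumes A: "A \<in> carrier_mat N N"
    and g: "irreducible g" and h: "irreducible h" and hg: "\<not> h dvd g" and gh: "\<not> g dvd h"
    and v1: "v1 \<in> carrier_vec N" "v1 \<noteq> 0\<^sub>v N" "poly_mat g A *\<^sub>v v1 = 0\<^sub>v N"
    and v2: "v2 \<in> carrier_vec N" "v2 \<noteq> 0\<^sub>v N" "poly_mat h A *\<^sub>v v2 = 0\<^sub>v N"
  shows "inj_on (\<lambda>(s, t). poly_mat s A *\<^sub>v v1 + poly_mat t A *\<^sub>v v2)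
           ({s. degree s < degree g} \<times> {t. degree t < degree h})"
proof (rule inj_onI, clarsimp)
  fix s t s' t' assume st: "degree s < degree g" "degree t < degree h" "degree s' < degree g" "degree t' < degree h"
    and eq: "poly_mat s A *\<^sub>v v1 + poly_mat t A *\<^sub>v v2 = poly_mat s' A *\<^sub>v v1 + poly_mat t' A *\<^sub>v v2"
  have "poly_mat (g * t) A *\<^sub>v v2 = poly_mat (g * t') A *\<^sub>v v2"
    using arg_cong[OF eq, of "\<lambda>x. poly_mat g A *\<^sub>v x"] by (simp add: poly_mat_mult_vec_add_kernel(1)[OF A v1(1) v2(1) v1(3)])
  then have "h dvd g * (t - t')"
    using poly_mat_mult_vec_eq_iff_dvd[OF A v2(1,2) h v2(3)] by (simp add: right_diff_distrib)
  then have "t = t'"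
    using field_poly_irreducible_imp_prime[OF h] hg st(2,4) by (rule eq_of_prime_dvd_mult_diff)
  have "poly_mat (h * s) A *\<^sub>v v1 = poly_mat (h * s') A *\<^sub>v v1"
    using arg_cong[OF eq, of "\<lambda>x. poly_mat h A *\<^sub>v x"] by (simp add: poly_mat_mult_vec_add_kernel(2)[OF A v2(1) v1(1) v2(3)])
  then have "g dvd h * (s - s')"
    using poly_mat_mult_vec_eq_iff_dvd[OF A v1(1,2) g v1(3)] by (simp add: right_diff_distrib)
  then have "s = s'"
    using field_poly_irreducible_imp_prime[OF g] gh st(1,3) by (rule eq_of_prime_dvd_mult_diff)
  with \<open>t = t'\<close> show "s = s' \<and> t = t'" by simp
qed

lemma poly_mat_kernels_span:
  fixes A :: "'a::{field,finite} mat"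
  assumes A: "A \<in> carrier_mat N N" and N: "N = degree g + degree h"
    and g: "irreducible g" and h: "irreducible h" and hg: "\<not> h dvd g" and gh: "\<not> g dvd h"
    and v1: "v1 \<in> carrier_vec N" "v1 \<noteq> 0\<^sub>v N" "poly_mat g A *\<^sub>v v1 = 0\<^sub>v N"
    and v2: "v2 \<in> carrier_vec N" "v2 \<noteq> 0\<^sub>v N" "poly_mat h A *\<^sub>v v2 = 0\<^sub>v N"
    and w: "w \<in> carrier_vec N"
  obtains s t where "w = poly_mat s A *\<^sub>v v1 + poly_mat t A *\<^sub>v v2"
proof -
  let ?D = "{s :: 'a poly. degree s < degree g} \<times> {t :: 'a poly. degree t < degree h}"
  define \<Phi> where "\<Phi> = (\<lambda>(s, t). poly_mat s A *\<^sub>v v1 + poly_mat t A *\<^sub>v v2)"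
  have "inj_on \<Phi> ?D" unfolding \<Phi>_def using A g h hg gh v1 v2 by (rule poly_mat_kernels_inj)
  moreover have "\<Phi> ` ?D \<subseteq> carrier_vec N"
    by (auto simp: \<Phi>_def intro!: add_carrier_vec mult_mat_vec_carrier[OF poly_mat_carrier[OF A]] v1(1) v2(1))
  moreover have "card (carrier_vec N :: 'a vec set) \<le> card ?D"
    using irreducible_imp_degree_pos[OF g] irreducible_imp_degree_pos[OF h]
    by (simp add: card_carrier_vec card_cartesian_product card_degree_less N power_add)
  ultimately have "\<Phi> ` ?D = carrier_vec N"
    by (intro card_seteq finite_carrier_vec) (simp_all add: card_image)
  with w obtain st where "w = \<Phi> st" by blast
  then show thesis by (intro that[of "fst st" "snd st"]) (simp add: \<Phi>_def split_beta)
qed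

lemma commuting_mat_mult_vec_eq_poly_mat:
  fixes A B :: "'a::{field,finite} mat"
  assumes A: "A \<in> carrier_mat N N" and B: "B \<in> carrier_mat N N" and AB: "A * B = B * A"
    and char: "char_poly A = g * h" and g: "irreducible g" and h: "irreducible h"
    and gh: "\<not> g dvd h" and hg: "\<not> h dvd g"
    and v: "v \<in> carrier_vec N" "v \<noteq> 0\<^sub>v N" "poly_mat g A *\<^sub>v v = 0\<^sub>v N"
  obtains s where "B *\<^sub>v v = poly_mat s A *\<^sub>v v"
proof -
  have "N = degree (g * h)" using degree_monic_char_poly[OF A] char by simp
  moreover have "g \<noteq> 0" "h \<noteq> 0" using g h by auto
  ultimately have N: "N = degree g + degree h" by (simp add: degree_mult_eq)
  have "char_poly A = h * g" using char by (simp add: mult.commute)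
  then obtain v2 where v2: "v2 \<in> carrier_vec N" "v2 \<noteq> 0\<^sub>v N" "poly_mat h A *\<^sub>v v2 = 0\<^sub>v N"
    using field_poly_irreducible_imp_prime[OF h] hg by (rule exists_kernel_vector[OF A])
  have Bv: "B *\<^sub>v v \<in> carrier_vec N" using B v by simp
  obtain s t where st: "B *\<^sub>v v = poly_mat s A *\<^sub>v v + poly_mat t A *\<^sub>v v2"
    using poly_mat_kernels_span[OF A N g h hg gh v v2 Bv] .
  have "poly_mat g A *\<^sub>v (B *\<^sub>v v) = (poly_mat g A * B) *\<^sub>v v"
    using assoc_mult_mat_vec[OF poly_mat_carrier[OF A] B v(1)] by simp
  also have "\<dots> = B *\<^sub>v (poly_mat g A *\<^sub>v v)"
    using poly_mat_commute[OF A B AB] assoc_mult_mat_vec[OF B poly_mat_carrier[OF A] v(1)] by simp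
  finally have "poly_mat g A *\<^sub>v (B *\<^sub>v v) = B *\<^sub>v (poly_mat g A *\<^sub>v v)" .
  then have "poly_mat (g * t) A *\<^sub>v v2 = 0\<^sub>v N"
    using st v(3) by (simp add: poly_mat_mult_vec_add_kernel(1)[OF A v(1) v2(1) v(3)] mult_mat_vec_zero[OF B])
  then have "h dvd g * t" using poly_mat_mult_vec_eq_0_iff_dvd[OF A v2(1,2) h v2(3)] by simp
  then have "h dvd t" using field_poly_irreducible_imp_prime[OF h] hg by (simp add: prime_elem_dvd_mult_iff)
  then have "poly_mat t A *\<^sub>v v2 = 0\<^sub>v N" using poly_mat_mult_vec_eq_0_iff_dvd[OF A v2(1,2) h v2(3)] by simp
  then show thesis
    using st right_zero_vec[OF mult_mat_vec_carrier[OF poly_mat_carrier[OF A] v(1)]] by (intro that[of s]) simp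
qed

lemma root_mod_of_mat_root:
  fixes C \<alpha> :: "'a::{field,finite} mat"
  assumes C: "C \<in> carrier_mat N N" and \<alpha>: "\<alpha> \<in> carrier_mat N N" and root: "\<alpha> ^\<^sub>m M = C"
    and char: "char_poly C = g * h" and g: "irreducible g" and h: "irreducible h"
    and gh: "\<not> g dvd h" and hg: "\<not> h dvd g"
  obtains p where "[p ^ M = [:0, 1:]] (mod g)"
proof -
  obtain v where v: "v \<in> carrier_vec N" "v \<noteq> 0\<^sub>v N" "poly_mat g C *\<^sub>v v = 0\<^sub>v N"
    using char field_poly_irreducible_imp_prime[OF g] gh by (rule exists_kernel_vector[OF C])
  have C_poly: "C = poly_mat ([:0, 1:] ^ M) \<alpha>"
    using \<alpha> root poly_mat_x[OF \<alpha>] by (simp add: poly_mat_power)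
  have "\<alpha> ^\<^sub>m k = poly_mat ([:0, 1:] ^ k) \<alpha>" for k
    using \<alpha> poly_mat_x[OF \<alpha>] by (simp add: poly_mat_power)
  then have commute: "\<alpha> ^\<^sub>m k * C = C * \<alpha> ^\<^sub>m k" for k
    unfolding C_poly by (simp only: poly_mat_mult[OF \<alpha>, symmetric] mult.commute)
  have "C * \<alpha> = \<alpha> * C" using commute[of 1] \<alpha> by simp
  then obtain s where s: "\<alpha> *\<^sub>v v = poly_mat s C *\<^sub>v v"
    by (rule commuting_mat_mult_vec_eq_poly_mat[OF C \<alpha> _ char g h gh hg v])
  have pow: "\<alpha> ^\<^sub>m k *\<^sub>v v = poly_mat (s ^ k) C *\<^sub>v v" for k
  proof (induction k)
    case (Suc k)
    have "\<alpha> ^\<^sub>m Suc k *\<^sub>v v = \<alpha> ^\<^sub>m k *\<^sub>v (poly_mat s C *\<^sub>v v)"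
      using assoc_mult_mat_vec[OF pow_carrier_mat[OF \<alpha>] \<alpha> v(1)] s by simp
    also have "\<dots> = (\<alpha> ^\<^sub>m k * poly_mat s C) *\<^sub>v v"
      using assoc_mult_mat_vec[OF pow_carrier_mat[OF \<alpha>] poly_mat_carrier[OF C] v(1)] by simp
    also have "\<dots> = poly_mat s C *\<^sub>v (\<alpha> ^\<^sub>m k *\<^sub>v v)"
      using poly_mat_commute[OF C pow_carrier_mat[OF \<alpha>] commute[symmetric]]
        assoc_mult_mat_vec[OF poly_mat_carrier[OF C] pow_carrier_mat[OF \<alpha>] v(1)] by simp
    also have "\<dots> = poly_mat (s ^ Suc k) C *\<^sub>v v"
      using C v by (simp add: Suc.IH poly_mat_mult_mult_vec)
    finally show ?case .
  qed (use C \<alpha> v in simp)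
  have "poly_mat (s ^ M) C *\<^sub>v v = poly_mat [:0, 1:] C *\<^sub>v v"
    using pow[of M] root poly_mat_x[OF C] by simp
  then have "g dvd s ^ M - [:0, 1:]" using poly_mat_mult_vec_eq_iff_dvd[OF C v(1,2) g v(3)] by simp
  then show thesis by (intro that[of s]) (simp add: cong_iff_dvd_diff)
qed

section \<open>Symplectic matrices\<close>

lemma poly_mat_intertwine:
  assumes X: "X \<in> carrier_mat n n" and Y: "Y \<in> carrier_mat n n" and \<Omega>: "\<Omega> \<in> carrier_mat n n"
    and XY: "X * \<Omega> = \<Omega> * Y"
  shows "poly_mat r X * \<Omega> = \<Omega> * poly_mat r Y"
proof (induction r)
  case (pCons a r)
  have "poly_mat (pCons a r) X * \<Omega> = a \<cdot>\<^sub>m \<Omega> + X * (poly_mat r X * \<Omega>)"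
    using X \<Omega> by (simp add: poly_mat_pCons add_mult_distrib_mat[of _ n n] assoc_mult_mat[of _ n n _ n _ n]
        mult_smult_assoc_mat[of _ n n _ n])
  also have "\<dots> = a \<cdot>\<^sub>m \<Omega> + (X * \<Omega>) * poly_mat r Y"
    using X Y \<Omega> by (simp add: pCons.IH assoc_mult_mat[of _ n n _ n _ n])
  also have "\<dots> = \<Omega> * poly_mat (pCons a r) Y"
    using X Y \<Omega> by (simp add: XY poly_mat_pCons mult_add_distrib_mat[of _ n n _ n] mult_smult_distrib[of _ n n _ n]
        assoc_mult_mat[of _ n n _ n _ n])
  finally show ?case .
qed (use X Y \<Omega> in simp)

lemma poly_mat_in_sp_group:
  fixes C \<Omega> :: "'a::field mat"
  assumes C: "C \<in> sp_group d \<Omega>" and \<Omega>: "\<Omega> \<in> carrier_mat d d"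
    and f: "poly_mat f C = 0\<^sub>m d d" and \<iota>: "[[:0, 1:] * \<iota> = 1] (mod f)"
    and P: "[(P \<circ>\<^sub>p \<iota>) * P = 1] (mod f)"
  shows "poly_mat P C \<in> sp_group d \<Omega>"
proof -
  have Cd: "C \<in> carrier_mat d d" and CsP: "transpose_mat C * \<Omega> * C = \<Omega>"
    using C by (auto simp: sp_group_def)
  define I where "I = poly_mat \<iota> C"
  have I: "I \<in> carrier_mat d d" using Cd by (simp add: I_def)
  have "C * I = poly_mat ([:0, 1:] * \<iota>) C"
    by (simp only: I_def poly_mat_mult[OF Cd] poly_mat_x[OF Cd])
  also have "\<dots> = 1\<^sub>m d" using poly_mat_cong[OF Cd f \<iota>] Cd by simp
  finally have "C * I = 1\<^sub>m d" .
  have Ct: "transpose_mat C * \<Omega> \<in> carrier_mat d d" using Cd \<Omega> by simp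
  have "transpose_mat C * \<Omega> = transpose_mat C * \<Omega> * (C * I)"
    using right_mult_one_mat[OF Ct] by (simp add: \<open>C * I = 1\<^sub>m d\<close>)
  also have "\<dots> = \<Omega> * I" using Ct Cd I by (simp add: CsP flip: assoc_mult_mat[OF Ct Cd I])
  finally have "transpose_mat C * \<Omega> = \<Omega> * I" .
  then have "poly_mat P (transpose_mat C) * \<Omega> = \<Omega> * poly_mat P I"
    using Cd I \<Omega> by (intro poly_mat_intertwine) auto
  then have "transpose_mat (poly_mat P C) * \<Omega> * poly_mat P C = \<Omega> * poly_mat ((P \<circ>\<^sub>p \<iota>) * P) C"
    using Cd I \<Omega> by (simp add: poly_mat_transpose I_def poly_mat_pcompose poly_mat_mult assoc_mult_mat[of _ d d _ d _ d])
  also have "\<dots> = \<Omega>" using poly_mat_cong[OF Cd f P] Cd \<Omega> by simp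
  finally show ?thesis using Cd by (simp add: sp_group_def)
qed

lemma symplectic_root_of_root_mod:
  fixes g p :: "'a::field poly" and C \<Omega> :: "'a mat"
  assumes g: "monic g" "irreducible g" "coeff g 0 \<noteq> 0" "g \<noteq> recip_poly g"
    and "0 < M" and root: "[p ^ M = [:0, 1:]] (mod g)"
    and C: "C \<in> sp_group d \<Omega>" and \<Omega>: "\<Omega> \<in> carrier_mat d d"
    and char: "char_poly C = g * recip_poly g"
  shows "\<exists>\<alpha> \<in> sp_group d \<Omega>. \<alpha> ^\<^sub>m M = C"
proof -
  have Cd: "C \<in> carrier_mat d d" using C by (simp add: sp_group_def)
  have "coeff (g * recip_poly g) 0 \<noteq> 0"
    using g(2,3) coeff_0_recip_poly[of g] by (auto simp: coeff_mult_0)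
  then obtain \<iota> where \<iota>: "[[:0, 1:] * \<iota> = 1] (mod g * recip_poly g)"
    by (rule cong_inverse_poly[OF coprime_x_poly])
  obtain P where P: "[P ^ M = [:0, 1:]] (mod g * recip_poly g)"
    and P_sp: "[(P \<circ>\<^sub>p \<iota>) * P = 1] (mod g * recip_poly g)"
    using exists_symplectic_root_poly[OF g \<open>0 < M\<close> root \<iota>] .
  have CH: "poly_mat (g * recip_poly g) C = 0\<^sub>m d d"
    using cayley_hamilton[OF Cd] char by simp
  have "poly_mat P C ^\<^sub>m M = C"
    using poly_mat_cong[OF Cd CH P] poly_mat_x[OF Cd] by (simp add: poly_mat_power[OF Cd])
  moreover have "poly_mat P C \<in> sp_group d \<Omega>"
    using C \<Omega> CH \<iota> P_sp by (rule poly_mat_in_sp_group)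
  ultimately show ?thesis by (intro bexI[of _ "poly_mat P C"])
qed

theorem corollary4p19:
  fixes g :: "'a::{field,finite} poly" and Omega C :: "'a mat" and M n :: nat
  assumes "M \<ge> 2"
    and "monic g" and "irreducible g" and "degree g = n"
    and "coeff g 0 \<noteq> 0" and "g \<noteq> recip_poly g"
    and "nondeg_alternating (2 * n) Omega"
    and "C \<in> sp_group (2 * n) Omega"
    and "char_poly C = g * recip_poly g"
  shows "(\<exists>\<alpha> \<in> sp_group (2 * n) Omega. \<alpha> ^\<^sub>m M = C) \<longleftrightarrow> M_power_poly M g"
proof -
  have M: "0 < M" using assms(1) by simp
  have C: "C \<in> carrier_mat (2 * n) (2 * n)" using assms(8) by (simp add: sp_group_def)
  have \<Omega>: "Omega \<in> carrier_mat (2 * n) (2 * n)" using assms(7) by (simp add: nondeg_alternating_def)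
  have "(\<exists>\<alpha> \<in> sp_group (2 * n) Omega. \<alpha> ^\<^sub>m M = C) \<longleftrightarrow> (\<exists>p. [p ^ M = [:0, 1:]] (mod g))"
  proof
    assume "\<exists>\<alpha> \<in> sp_group (2 * n) Omega. \<alpha> ^\<^sub>m M = C"
    then obtain \<alpha> where \<alpha>: "\<alpha> \<in> carrier_mat (2 * n) (2 * n)" and root: "\<alpha> ^\<^sub>m M = C"
      by (auto simp: sp_group_def)
    obtain p where "[p ^ M = [:0, 1:]] (mod g)"
      using C \<alpha> root assms(9,3) irreducible_recip_poly[OF assms(3,5)] recip_poly_not_dvd[OF assms(2,3,5,6)]
      by (rule root_mod_of_mat_root)
    then show "\<exists>p. [p ^ M = [:0, 1:]] (mod g)" ..
  next
    assume "\<exists>p. [p ^ M = [:0, 1:]] (mod g)"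
    then obtain p where "[p ^ M = [:0, 1:]] (mod g)" ..
    with assms(2,3,5,6) M show "\<exists>\<alpha> \<in> sp_group (2 * n) Omega. \<alpha> ^\<^sub>m M = C"
      using assms(8) \<Omega> assms(9) by (rule symplectic_root_of_root_mod)
  qed
  also have "\<dots> \<longleftrightarrow> M_power_poly M g" using M_power_poly_iff_root[OF assms(2,3,5) M] by simp
  finally show ?thesis .
qed

end
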